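(* Let $\mathbb{F}$ be an algebraically closed field of characteristic $2$. Let $A_1,\dots,A_4,B_1,\dots,B_4\in M(2)$ satisfy the Standing Hypothesis, and suppose $A_1=\begin{pmatrix}a_1&1\\0&a_1\end{pmatrix}$ and $B_1=\begin{pmatrix}b_1&1\\0&b_1\end{pmatrix}$ for some $a_1,b_1\in\mathbb{F}$. Then $\mathrm{tr}(A_1A_2A_3A_4)=\mathrm{tr}(B_1B_2B_3B_4)$.
   Context: $M(2)$ is the space of $2\times 2$ matrices over $\mathbb{F}$. Standing Hypothesis: $\mathrm{tr}(A_i)=\mathrm{tr}(B_i)$ and $\det(A_i)=\det(B_i)$ for $1\le i\le 4$; $\mathrm{tr}(A_iA_j)=\mathrm{tr}(B_iB_j)$ for $1\le i<j\le 4$; $\mathrm{tr}(A_iA_jA_k)=\mathrm{tr}(B_iB_jB_k)$ for $1\le i<j<k\le 4$. *)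

theory Defs
  imports "HOL-Analysis.Analysis" "HOL-Computational_Algebra.Polynomial"
begin

definition jblock :: "'a::field \<Rightarrow> 'a^2^2" where
  "jblock c = (\<chi> i j. if i = j then c else if i = 1 \<and> j = 2 then 1 else 0)"

end

theory Submission
  imports Defs
begin

text \<open>Write J for the block with diagonal c and m(M) for the lower-left entry of M.
For every M one has tr (J M) = c tr M + m(M), and c itself is fixed by det J = c^2,
since squaring is injective in characteristic 2. Hence the hypotheses force m(A_i) and
m(A_i A_j) to agree with their B-counterparts, and the claim reduces to
m(A_2 A_3 A_4) = m(B_2 B_3 B_4). Three polynomial identities express m(XYZ), multiplied
by m(X), m(Y) or m(Z) respectively, through quantities already known to agree; and if
m(X) = m(Y) = m(Z) = 0 then m(XYZ) = 0 as well.\<close>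

lemma matrix_mult_2_nth:
  "((M::'a::comm_ring_1^2^2) ** N)$i$j = M$i$1 * N$1$j + M$i$2 * N$2$j"
  by (simp add: matrix_matrix_mult_def sum_2)

lemma trace_2: "trace (M::'a::comm_ring_1^2^2) = M$1$1 + M$2$2"
  by (simp add: trace_def sum_2)

lemma jblock_nth:
  "jblock c $1$1 = c" "jblock c $1$2 = 1" "jblock c $2$1 = 0" "jblock c $2$2 = c"
  by (simp_all add: jblock_def)

lemma det_jblock: "det (jblock c) = c * c"
  by (simp add: det_2 jblock_nth)

lemma trace_jblock_mult: "trace (jblock c ** M) = c * trace M + M$2$1"
  by (simp add: trace_2 matrix_mult_2_nth jblock_nth algebra_simps)

lemma square_inj_CHAR_2:
  fixes x y :: "'a::idom"
  assumes "CHAR('a) = 2" and "x * x = y * y"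
  shows "x = y"
proof -
  have "(2::'a) = 0" using of_nat_CHAR[where 'a='a] assms(1) by simp
  then have "(x - y) * (x - y) = x * x - y * y"
    by (simp add: algebra_simps flip: mult_2)
  with assms(2) show ?thesis by simp
qed

lemma lower_left_mult3_times_left:
  "X$2$1 * (X**Y**Z)$2$1 = (X**Y)$2$1 * (X**Z)$2$1
     + Z$2$1 * (X$2$1 * trace (X**Y) - trace X * (X**Y)$2$1 + det X * Y$2$1)"
  for X Y Z :: "'a::comm_ring_1^2^2"
  by (simp add: trace_2 matrix_mult_2_nth det_2 algebra_simps)

lemma lower_left_mult3_times_middle:
  "Y$2$1 * (X**Y**Z)$2$1 = (X**Y)$2$1 * (Y**Z)$2$1 - X$2$1 * Z$2$1 * det Y"
  for X Y Z :: "'a::comm_ring_1^2^2"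
  by (simp add: trace_2 matrix_mult_2_nth det_2 algebra_simps)

lemma lower_left_mult3_times_right:
  "Z$2$1 * (X**Y**Z)$2$1 = X$2$1 * (Z$2$1 * trace (Y**Z) + Y$2$1 * det Z)
     + (Y**Z)$2$1 * ((X**Z)$2$1 - X$2$1 * trace Z)"
  for X Y Z :: "'a::comm_ring_1^2^2"
  by (simp add: trace_2 matrix_mult_2_nth det_2 algebra_simps)

lemma lower_left_mult3_eq:
  fixes X Y Z X' Y' Z' :: "'a::idom^2^2"
  assumes "X$2$1 = X'$2$1" "Y$2$1 = Y'$2$1" "Z$2$1 = Z'$2$1"
    and "(X**Y)$2$1 = (X'**Y')$2$1" "(X**Z)$2$1 = (X'**Z')$2$1" "(Y**Z)$2$1 = (Y'**Z')$2$1"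
    and "trace X = trace X'" "trace Z = trace Z'"
    and "trace (X**Y) = trace (X'**Y')" "trace (Y**Z) = trace (Y'**Z')"
    and "det X = det X'" "det Y = det Y'" "det Z = det Z'"
  shows "(X**Y**Z)$2$1 = (X'**Y'**Z')$2$1"
proof -
  consider "X$2$1 \<noteq> 0" | "Y$2$1 \<noteq> 0" | "Z$2$1 \<noteq> 0" | "X$2$1 = 0 \<and> Y$2$1 = 0 \<and> Z$2$1 = 0"
    by blast
  then show ?thesis
  proof cases
    case 1
    have "X$2$1 * (X**Y**Z)$2$1 = X$2$1 * (X'**Y'**Z')$2$1"
      using assms lower_left_mult3_times_left[of X Y Z] lower_left_mult3_times_left[of X' Y' Z'] by simp
    with 1 show ?thesis by simp
  next
    case 2
    have "Y$2$1 * (X**Y**Z)$2$1 = Y$2$1 * (X'**Y'**Z')$2$1"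
      using assms lower_left_mult3_times_middle[of Y X Z] lower_left_mult3_times_middle[of Y' X' Z'] by simp
    with 2 show ?thesis by simp
  next
    case 3
    have "Z$2$1 * (X**Y**Z)$2$1 = Z$2$1 * (X'**Y'**Z')$2$1"
      using assms lower_left_mult3_times_right[of Z X Y] lower_left_mult3_times_right[of Z' X' Y'] by simp
    with 3 show ?thesis by simp
  next
    case 4
    then show ?thesis using assms by (simp add: matrix_mult_2_nth)
  qed
qed

theorem lemma7:
  fixes A B :: "nat \<Rightarrow> 'a::alg_closed_field^2^2" and a1 b1 :: 'a
  assumes char2: "CHAR('a) = 2"
    and tr1: "\<forall>i\<in>{1..4}. trace (A i) = trace (B i)"
    and det1: "\<forall>i\<in>{1..4}. det (A i) = det (B i)"
    and tr2: "\<forall>i\<in>{1..4}. \<forall>j\<in>{1..4}. i < j \<longrightarrow> trace (A i ** A j) = trace (B i ** B j)"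
    and tr3: "\<forall>i\<in>{1..4}. \<forall>j\<in>{1..4}. \<forall>k\<in>{1..4}. i < j \<and> j < k \<longrightarrow>
               trace (A i ** A j ** A k) = trace (B i ** B j ** B k)"
    and A1: "A 1 = jblock a1"
    and B1: "B 1 = jblock b1"
  shows "trace (A 1 ** A 2 ** A 3 ** A 4) = trace (B 1 ** B 2 ** B 3 ** B 4)"
proof -
  have "det (A 1) = det (B 1)" using det1 by simp
  then have "a1 * a1 = b1 * b1" unfolding A1 B1 det_jblock .
  with char2 have ab: "a1 = b1" by (rule square_inj_CHAR_2)
  have lower_left: "A i $2$1 = B i $2$1" if "i \<in> {2..4}" for i
  proof -
    have "trace (A 1 ** A i) = trace (B 1 ** B i)" "trace (A i) = trace (B i)"
      using tr1 tr2 that by auto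
    then show ?thesis unfolding A1 B1 ab trace_jblock_mult by simp
  qed
  have lower_left_mult: "(A i ** A j)$2$1 = (B i ** B j)$2$1"
    if "i \<in> {2..4}" "j \<in> {2..4}" "i < j" for i j
  proof -
    have "trace (A 1 ** A i ** A j) = trace (B 1 ** B i ** B j)"
      "trace (A i ** A j) = trace (B i ** B j)"
      using tr2 tr3 that by auto
    then show ?thesis unfolding A1 B1 ab matrix_mul_assoc[symmetric] trace_jblock_mult by simp
  qed
  have "(A 2 ** A 3 ** A 4)$2$1 = (B 2 ** B 3 ** B 4)$2$1"
    by (rule lower_left_mult3_eq)
      (auto intro: lower_left lower_left_mult simp: tr1 tr2 det1)
  moreover have "trace (A 2 ** A 3 ** A 4) = trace (B 2 ** B 3 ** B 4)"
    using tr3 by auto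
  ultimately show ?thesis
    unfolding A1 B1 ab matrix_mul_assoc[symmetric] trace_jblock_mult by simp
qed

end
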